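(* Any homomorphism between special 2-groups is isomorphic, in the 2-category $\mathrm{C2G}$, to a special homomorphism.
   Context: A coherent 2-group is a weak monoidal category in which all morphisms are invertible and each object $x$ is equipped with an adjoint equivalence $(x,\bar x,i_x,e_x)$ ($i_x\colon 1\to x\otimes\bar x$, $e_x\colon\bar x\otimes x\to 1$ isomorphisms satisfying the zig-zag identities). A special 2-group is a coherent 2-group whose underlying category is skeletal (isomorphic objects are equal) and whose left unitor, right unitor, units $i$ and counits $e$ are identity natural transformations. A homomorphism of coherent 2-groups is a weak monoidal functor $F$ (structure maps $F_2\colon F(x)\otimes F(y)\to F(x\otimes y)$, $F_0\colon 1'\to F(1)$); it is special if it goes between special 2-groups and $F_0$ is an identity morphism. $\mathrm{C2G}$ is the strict 2-category of coherent 2-groups, weak monoidal functors and monoidal natural transformations; "isomorphic" means related by an invertible monoidal natural transformation. *)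

theory Defs
  imports Main
begin

text \<open>Composition convention: mcomp C g f is g after f (defined when mdom g = mcod f).
  tens is the tensor on objects, tensm on morphisms; assoc x y z : (x*y)*z -> x*(y*z);
  lunit x : 1*x -> x; runit x : x*1 -> x.\<close>

record ('o, 'm) mcat =
  obj :: "'o set"
  arr :: "'m set"
  mdom :: "'m \<Rightarrow> 'o"
  mcod :: "'m \<Rightarrow> 'o"
  mcomp :: "'m \<Rightarrow> 'm \<Rightarrow> 'm"
  mid :: "'o \<Rightarrow> 'm"
  tens :: "'o \<Rightarrow> 'o \<Rightarrow> 'o"
  tensm :: "'m \<Rightarrow> 'm \<Rightarrow> 'm"
  unit_ob :: "'o"
  assoc :: "'o \<Rightarrow> 'o \<Rightarrow> 'o \<Rightarrow> 'm"
  lunit :: "'o \<Rightarrow> 'm"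
  runit :: "'o \<Rightarrow> 'm"

text \<open>Coherent 2-group data: dual object, unit i_x : 1 -> x*xbar, counit e_x : xbar*x -> 1.\<close>
record ('o, 'm) c2g = "('o, 'm) mcat" +
  dual :: "'o \<Rightarrow> 'o"
  coev :: "'o \<Rightarrow> 'm"
  ev :: "'o \<Rightarrow> 'm"

definition category :: "('o, 'm, 'z) mcat_scheme \<Rightarrow> bool" where
  "category C \<equiv>
    (\<forall>f\<in>arr C. mdom C f \<in> obj C \<and> mcod C f \<in> obj C) \<and>
    (\<forall>x\<in>obj C. mid C x \<in> arr C \<and> mdom C (mid C x) = x \<and> mcod C (mid C x) = x) \<and>
    (\<forall>f\<in>arr C. \<forall>g\<in>arr C. mdom C g = mcod C f \<longrightarrow>
        mcomp C g f \<in> arr C \<and> mdom C (mcomp C g f) = mdom C f \<and> mcod C (mcomp C g f) = mcod C g) \<and>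
    (\<forall>f\<in>arr C. mcomp C f (mid C (mdom C f)) = f \<and> mcomp C (mid C (mcod C f)) f = f) \<and>
    (\<forall>f\<in>arr C. \<forall>g\<in>arr C. \<forall>h\<in>arr C. mdom C g = mcod C f \<longrightarrow> mdom C h = mcod C g \<longrightarrow>
        mcomp C h (mcomp C g f) = mcomp C (mcomp C h g) f)"

definition is_inverse :: "('o, 'm, 'z) mcat_scheme \<Rightarrow> 'm \<Rightarrow> 'm \<Rightarrow> bool" where
  "is_inverse C f g \<equiv> f \<in> arr C \<and> g \<in> arr C \<and> mdom C g = mcod C f \<and> mcod C g = mdom C f \<and>
     mcomp C g f = mid C (mdom C f) \<and> mcomp C f g = mid C (mcod C f)"

definition iso :: "('o, 'm, 'z) mcat_scheme \<Rightarrow> 'm \<Rightarrow> bool" where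
  "iso C f \<equiv> \<exists>g. is_inverse C f g"

definition inv_arr :: "('o, 'm, 'z) mcat_scheme \<Rightarrow> 'm \<Rightarrow> 'm" where
  "inv_arr C f = (SOME g. is_inverse C f g)"

definition monoidal_category :: "('o, 'm, 'z) mcat_scheme \<Rightarrow> bool" where
  "monoidal_category C \<equiv>
    category C \<and>
    unit_ob C \<in> obj C \<and>
    (\<forall>x\<in>obj C. \<forall>y\<in>obj C. tens C x y \<in> obj C) \<and>
    (\<forall>f\<in>arr C. \<forall>g\<in>arr C. tensm C f g \<in> arr C \<and>
        mdom C (tensm C f g) = tens C (mdom C f) (mdom C g) \<and>
        mcod C (tensm C f g) = tens C (mcod C f) (mcod C g)) \<and>
    (\<forall>x\<in>obj C. \<forall>y\<in>obj C. tensm C (mid C x) (mid C y) = mid C (tens C x y)) \<and>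
    (\<forall>f\<in>arr C. \<forall>f'\<in>arr C. \<forall>g\<in>arr C. \<forall>g'\<in>arr C.
        mdom C f' = mcod C f \<longrightarrow> mdom C g' = mcod C g \<longrightarrow>
        tensm C (mcomp C f' f) (mcomp C g' g) = mcomp C (tensm C f' g') (tensm C f g)) \<and>
    (\<forall>x\<in>obj C. \<forall>y\<in>obj C. \<forall>z\<in>obj C. assoc C x y z \<in> arr C \<and> iso C (assoc C x y z) \<and>
        mdom C (assoc C x y z) = tens C (tens C x y) z \<and>
        mcod C (assoc C x y z) = tens C x (tens C y z)) \<and>
    (\<forall>f\<in>arr C. \<forall>g\<in>arr C. \<forall>h\<in>arr C.
        mcomp C (assoc C (mcod C f) (mcod C g) (mcod C h)) (tensm C (tensm C f g) h) =
        mcomp C (tensm C f (tensm C g h)) (assoc C (mdom C f) (mdom C g) (mdom C h))) \<and>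
    (\<forall>x\<in>obj C. lunit C x \<in> arr C \<and> iso C (lunit C x) \<and>
        mdom C (lunit C x) = tens C (unit_ob C) x \<and> mcod C (lunit C x) = x) \<and>
    (\<forall>f\<in>arr C. mcomp C (lunit C (mcod C f)) (tensm C (mid C (unit_ob C)) f) =
        mcomp C f (lunit C (mdom C f))) \<and>
    (\<forall>x\<in>obj C. runit C x \<in> arr C \<and> iso C (runit C x) \<and>
        mdom C (runit C x) = tens C x (unit_ob C) \<and> mcod C (runit C x) = x) \<and>
    (\<forall>f\<in>arr C. mcomp C (runit C (mcod C f)) (tensm C f (mid C (unit_ob C))) =
        mcomp C f (runit C (mdom C f))) \<and>
    \<comment> \<open>pentagon\<close>
    (\<forall>w\<in>obj C. \<forall>x\<in>obj C. \<forall>y\<in>obj C. \<forall>z\<in>obj C.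
        mcomp C (tensm C (mid C w) (assoc C x y z))
          (mcomp C (assoc C w (tens C x y) z) (tensm C (assoc C w x y) (mid C z))) =
        mcomp C (assoc C w x (tens C y z)) (assoc C (tens C w x) y z)) \<and>
    \<comment> \<open>triangle\<close>
    (\<forall>x\<in>obj C. \<forall>y\<in>obj C.
        mcomp C (tensm C (mid C x) (lunit C y)) (assoc C x (unit_ob C) y) =
        tensm C (runit C x) (mid C y))"

definition coherent_2group :: "('o, 'm, 'z) c2g_scheme \<Rightarrow> bool" where
  "coherent_2group C \<equiv>
    monoidal_category C \<and>
    (\<forall>f\<in>arr C. iso C f) \<and>
    (\<forall>x\<in>obj C.
       dual C x \<in> obj C \<and>
       coev C x \<in> arr C \<and> iso C (coev C x) \<and>
       mdom C (coev C x) = unit_ob C \<and> mcod C (coev C x) = tens C x (dual C x) \<and>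
       ev C x \<in> arr C \<and> iso C (ev C x) \<and>
       mdom C (ev C x) = tens C (dual C x) x \<and> mcod C (ev C x) = unit_ob C \<and>
       \<comment> \<open>zig-zag identities\<close>
       mcomp C (runit C x)
         (mcomp C (tensm C (mid C x) (ev C x))
           (mcomp C (assoc C x (dual C x) x)
             (mcomp C (tensm C (coev C x) (mid C x)) (inv_arr C (lunit C x))))) = mid C x \<and>
       mcomp C (lunit C (dual C x))
         (mcomp C (tensm C (ev C x) (mid C (dual C x)))
           (mcomp C (inv_arr C (assoc C (dual C x) x (dual C x)))
             (mcomp C (tensm C (mid C (dual C x)) (coev C x)) (inv_arr C (runit C (dual C x)))))) =
         mid C (dual C x))"

definition skeletal :: "('o, 'm, 'z) mcat_scheme \<Rightarrow> bool" where
  "skeletal C \<equiv> \<forall>x\<in>obj C. \<forall>y\<in>obj C.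
     (\<exists>f\<in>arr C. iso C f \<and> mdom C f = x \<and> mcod C f = y) \<longrightarrow> x = y"

definition special_2group :: "('o, 'm, 'z) c2g_scheme \<Rightarrow> bool" where
  "special_2group C \<equiv> coherent_2group C \<and> skeletal C \<and>
    (\<forall>x\<in>obj C. lunit C x = mid C x \<and> runit C x = mid C x \<and>
        coev C x = mid C (unit_ob C) \<and> ev C x = mid C (unit_ob C))"

text \<open>f2 x y : F x * F y -> F (x*y);  f0 : 1' -> F 1.\<close>
record ('o1, 'm1, 'o2, 'm2) mfun =
  fob :: "'o1 \<Rightarrow> 'o2"
  farr :: "'m1 \<Rightarrow> 'm2"
  f2 :: "'o1 \<Rightarrow> 'o1 \<Rightarrow> 'm2"
  f0 :: "'m2"

definition is_functor :: "('o1, 'm1, 'z1) mcat_scheme \<Rightarrow> ('o2, 'm2, 'z2) mcat_scheme \<Rightarrow>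
    ('o1, 'm1, 'o2, 'm2, 'z3) mfun_scheme \<Rightarrow> bool" where
  "is_functor C D F \<equiv>
    (\<forall>x\<in>obj C. fob F x \<in> obj D) \<and>
    (\<forall>f\<in>arr C. farr F f \<in> arr D \<and> mdom D (farr F f) = fob F (mdom C f) \<and>
        mcod D (farr F f) = fob F (mcod C f)) \<and>
    (\<forall>x\<in>obj C. farr F (mid C x) = mid D (fob F x)) \<and>
    (\<forall>f\<in>arr C. \<forall>g\<in>arr C. mdom C g = mcod C f \<longrightarrow>
        farr F (mcomp C g f) = mcomp D (farr F g) (farr F f))"

definition weak_monoidal_functor :: "('o1, 'm1, 'z1) mcat_scheme \<Rightarrow> ('o2, 'm2, 'z2) mcat_scheme \<Rightarrow>
    ('o1, 'm1, 'o2, 'm2, 'z3) mfun_scheme \<Rightarrow> bool" where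
  "weak_monoidal_functor C D F \<equiv>
    is_functor C D F \<and>
    (\<forall>x\<in>obj C. \<forall>y\<in>obj C. f2 F x y \<in> arr D \<and> iso D (f2 F x y) \<and>
        mdom D (f2 F x y) = tens D (fob F x) (fob F y) \<and>
        mcod D (f2 F x y) = fob F (tens C x y)) \<and>
    (\<forall>f\<in>arr C. \<forall>g\<in>arr C.
        mcomp D (farr F (tensm C f g)) (f2 F (mdom C f) (mdom C g)) =
        mcomp D (f2 F (mcod C f) (mcod C g)) (tensm D (farr F f) (farr F g))) \<and>
    f0 F \<in> arr D \<and> iso D (f0 F) \<and>
    mdom D (f0 F) = unit_ob D \<and> mcod D (f0 F) = fob F (unit_ob C) \<and>
    (\<forall>x\<in>obj C. \<forall>y\<in>obj C. \<forall>z\<in>obj C.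
        mcomp D (farr F (assoc C x y z))
          (mcomp D (f2 F (tens C x y) z) (tensm D (f2 F x y) (mid D (fob F z)))) =
        mcomp D (f2 F x (tens C y z))
          (mcomp D (tensm D (mid D (fob F x)) (f2 F y z))
             (assoc D (fob F x) (fob F y) (fob F z)))) \<and>
    (\<forall>x\<in>obj C.
        mcomp D (farr F (lunit C x))
          (mcomp D (f2 F (unit_ob C) x) (tensm D (f0 F) (mid D (fob F x)))) =
        lunit D (fob F x)) \<and>
    (\<forall>x\<in>obj C.
        mcomp D (farr F (runit C x))
          (mcomp D (f2 F x (unit_ob C)) (tensm D (mid D (fob F x)) (f0 F))) =
        runit D (fob F x))"

definition c2g_hom :: "('o1, 'm1, 'z1) c2g_scheme \<Rightarrow> ('o2, 'm2, 'z2) c2g_scheme \<Rightarrow>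
    ('o1, 'm1, 'o2, 'm2, 'z3) mfun_scheme \<Rightarrow> bool" where
  "c2g_hom C D F \<equiv> coherent_2group C \<and> coherent_2group D \<and> weak_monoidal_functor C D F"

definition special_hom :: "('o1, 'm1, 'z1) c2g_scheme \<Rightarrow> ('o2, 'm2, 'z2) c2g_scheme \<Rightarrow>
    ('o1, 'm1, 'o2, 'm2, 'z3) mfun_scheme \<Rightarrow> bool" where
  "special_hom C D F \<equiv> special_2group C \<and> special_2group D \<and> c2g_hom C D F \<and>
     f0 F = mid D (unit_ob D)"

definition monoidal_nat_trans :: "('o1, 'm1, 'z1) mcat_scheme \<Rightarrow> ('o2, 'm2, 'z2) mcat_scheme \<Rightarrow>
    ('o1, 'm1, 'o2, 'm2, 'z3) mfun_scheme \<Rightarrow> ('o1, 'm1, 'o2, 'm2, 'z4) mfun_scheme \<Rightarrow>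
    ('o1 \<Rightarrow> 'm2) \<Rightarrow> bool" where
  "monoidal_nat_trans C D F G \<theta> \<equiv>
    (\<forall>x\<in>obj C. \<theta> x \<in> arr D \<and> mdom D (\<theta> x) = fob F x \<and> mcod D (\<theta> x) = fob G x) \<and>
    (\<forall>f\<in>arr C. mcomp D (farr G f) (\<theta> (mdom C f)) = mcomp D (\<theta> (mcod C f)) (farr F f)) \<and>
    (\<forall>x\<in>obj C. \<forall>y\<in>obj C.
        mcomp D (\<theta> (tens C x y)) (f2 F x y) = mcomp D (f2 G x y) (tensm D (\<theta> x) (\<theta> y))) \<and>
    mcomp D (\<theta> (unit_ob C)) (f0 F) = f0 G"

definition monoidal_nat_iso :: "('o1, 'm1, 'z1) mcat_scheme \<Rightarrow> ('o2, 'm2, 'z2) mcat_scheme \<Rightarrow>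
    ('o1, 'm1, 'o2, 'm2, 'z3) mfun_scheme \<Rightarrow> ('o1, 'm1, 'o2, 'm2, 'z4) mfun_scheme \<Rightarrow>
    ('o1 \<Rightarrow> 'm2) \<Rightarrow> bool" where
  "monoidal_nat_iso C D F G \<theta> \<equiv> monoidal_nat_trans C D F G \<theta> \<and> (\<forall>x\<in>obj C. iso D (\<theta> x))"

definition isomorphic_homs :: "('o1, 'm1, 'z1) mcat_scheme \<Rightarrow> ('o2, 'm2, 'z2) mcat_scheme \<Rightarrow>
    ('o1, 'm1, 'o2, 'm2, 'z3) mfun_scheme \<Rightarrow> ('o1, 'm1, 'o2, 'm2, 'z4) mfun_scheme \<Rightarrow> bool" where
  "isomorphic_homs C D F G \<equiv> \<exists>\<theta>. monoidal_nat_iso C D F G \<theta>"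

end

theory Submission
  imports Defs
begin

text \<open>In a special 2-group D the unit is strict (1 \<otimes> x = x and id 1 \<otimes> f = f), and
  skeletality forces F 1 = 1, so F0 is an automorphism c of the unit. Tensoring with c\<inverse> is then a
  natural automorphism \<theta> x = c\<inverse> \<otimes> id (F x) of F. Transporting the monoidal structure of F
  along \<theta>, i.e. conjugating F2 by \<theta> and putting G0 = \<theta> 1 \<circ> F0, yields a weak monoidal
  functor G for which \<theta> is a monoidal natural isomorphism F \<Rightarrow> G, and G0 = c\<inverse> \<circ> c = id.\<close>

locale monoidal_cat =
  fixes C :: "('o, 'm, 'z) mcat_scheme"
  assumes monoidal: "monoidal_category C"
begin

lemma category: "category C"
  using monoidal unfolding monoidal_category_def by blast

lemma dom_in_obj [simp]: "f \<in> arr C \<Longrightarrow> mdom C f \<in> obj C"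
  and cod_in_obj [simp]: "f \<in> arr C \<Longrightarrow> mcod C f \<in> obj C"
  and id_in_arr [simp]: "x \<in> obj C \<Longrightarrow> mid C x \<in> arr C"
  and dom_id [simp]: "x \<in> obj C \<Longrightarrow> mdom C (mid C x) = x"
  and cod_id [simp]: "x \<in> obj C \<Longrightarrow> mcod C (mid C x) = x"
  using category unfolding category_def by blast+

lemma comp_in_arr [simp]: "\<lbrakk>f \<in> arr C; g \<in> arr C; mdom C g = mcod C f\<rbrakk> \<Longrightarrow> mcomp C g f \<in> arr C"
  and dom_comp [simp]:
    "\<lbrakk>f \<in> arr C; g \<in> arr C; mdom C g = mcod C f\<rbrakk> \<Longrightarrow> mdom C (mcomp C g f) = mdom C f"
  and cod_comp [simp]:
    "\<lbrakk>f \<in> arr C; g \<in> arr C; mdom C g = mcod C f\<rbrakk> \<Longrightarrow> mcod C (mcomp C g f) = mcod C g"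
  and comp_id_right [simp]: "\<lbrakk>f \<in> arr C; mdom C f = x\<rbrakk> \<Longrightarrow> mcomp C f (mid C x) = f"
  and comp_id_left [simp]: "\<lbrakk>f \<in> arr C; mcod C f = y\<rbrakk> \<Longrightarrow> mcomp C (mid C y) f = f"
  using category unfolding category_def by blast+

lemma comp_assoc:
  "\<lbrakk>f \<in> arr C; g \<in> arr C; h \<in> arr C; mdom C g = mcod C f; mdom C h = mcod C g\<rbrakk>
   \<Longrightarrow> mcomp C (mcomp C h g) f = mcomp C h (mcomp C g f)"
  using category unfolding category_def by metis

lemma unit_in_obj [simp]: "unit_ob C \<in> obj C"
  and tens_in_obj [simp]: "\<lbrakk>x \<in> obj C; y \<in> obj C\<rbrakk> \<Longrightarrow> tens C x y \<in> obj C"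
  and tensm_in_arr [simp]: "\<lbrakk>f \<in> arr C; g \<in> arr C\<rbrakk> \<Longrightarrow> tensm C f g \<in> arr C"
  and dom_tensm [simp]:
    "\<lbrakk>f \<in> arr C; g \<in> arr C\<rbrakk> \<Longrightarrow> mdom C (tensm C f g) = tens C (mdom C f) (mdom C g)"
  and cod_tensm [simp]:
    "\<lbrakk>f \<in> arr C; g \<in> arr C\<rbrakk> \<Longrightarrow> mcod C (tensm C f g) = tens C (mcod C f) (mcod C g)"
  and tensm_id [simp]: "\<lbrakk>x \<in> obj C; y \<in> obj C\<rbrakk> \<Longrightarrow> tensm C (mid C x) (mid C y) = mid C (tens C x y)"
  using monoidal unfolding monoidal_category_def by auto

lemma interchange:
  "\<lbrakk>f \<in> arr C; f' \<in> arr C; g \<in> arr C; g' \<in> arr C; mdom C f' = mcod C f; mdom C g' = mcod C g\<rbrakk>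
   \<Longrightarrow> tensm C (mcomp C f' f) (mcomp C g' g) = mcomp C (tensm C f' g') (tensm C f g)"
  using monoidal unfolding monoidal_category_def by blast

lemma assoc_in_arr [simp]: "\<lbrakk>x \<in> obj C; y \<in> obj C; z \<in> obj C\<rbrakk> \<Longrightarrow> assoc C x y z \<in> arr C"
  and dom_assoc [simp]:
    "\<lbrakk>x \<in> obj C; y \<in> obj C; z \<in> obj C\<rbrakk> \<Longrightarrow> mdom C (assoc C x y z) = tens C (tens C x y) z"
  and cod_assoc [simp]:
    "\<lbrakk>x \<in> obj C; y \<in> obj C; z \<in> obj C\<rbrakk> \<Longrightarrow> mcod C (assoc C x y z) = tens C x (tens C y z)"
  and lunit_in_arr [simp]: "x \<in> obj C \<Longrightarrow> lunit C x \<in> arr C"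
  and dom_lunit [simp]: "x \<in> obj C \<Longrightarrow> mdom C (lunit C x) = tens C (unit_ob C) x"
  and cod_lunit [simp]: "x \<in> obj C \<Longrightarrow> mcod C (lunit C x) = x"
  and runit_in_arr [simp]: "x \<in> obj C \<Longrightarrow> runit C x \<in> arr C"
  and dom_runit [simp]: "x \<in> obj C \<Longrightarrow> mdom C (runit C x) = tens C x (unit_ob C)"
  and cod_runit [simp]: "x \<in> obj C \<Longrightarrow> mcod C (runit C x) = x"
  using monoidal unfolding monoidal_category_def by auto

lemma assoc_naturality:
  "\<lbrakk>f \<in> arr C; g \<in> arr C; h \<in> arr C\<rbrakk> \<Longrightarrow>
   mcomp C (assoc C (mcod C f) (mcod C g) (mcod C h)) (tensm C (tensm C f g) h) =
   mcomp C (tensm C f (tensm C g h)) (assoc C (mdom C f) (mdom C g) (mdom C h))"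
  and lunit_naturality:
  "f \<in> arr C \<Longrightarrow>
   mcomp C (lunit C (mcod C f)) (tensm C (mid C (unit_ob C)) f) = mcomp C f (lunit C (mdom C f))"
  and runit_naturality:
  "f \<in> arr C \<Longrightarrow>
   mcomp C (runit C (mcod C f)) (tensm C f (mid C (unit_ob C))) = mcomp C f (runit C (mdom C f))"
  using monoidal unfolding monoidal_category_def by auto

lemma is_inverse_inv_arr: "iso C f \<Longrightarrow> is_inverse C f (inv_arr C f)"
  unfolding iso_def inv_arr_def by (rule someI_ex)

lemma iso_in_arr: "iso C f \<Longrightarrow> f \<in> arr C"
  unfolding iso_def is_inverse_def by blast

lemma inv_arr_in_arr [simp]: "iso C f \<Longrightarrow> inv_arr C f \<in> arr C"
  and dom_inv_arr [simp]: "iso C f \<Longrightarrow> mdom C (inv_arr C f) = mcod C f"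
  and cod_inv_arr [simp]: "iso C f \<Longrightarrow> mcod C (inv_arr C f) = mdom C f"
  and comp_inv_arr_left [simp]: "iso C f \<Longrightarrow> mcomp C (inv_arr C f) f = mid C (mdom C f)"
  and comp_inv_arr_right [simp]: "iso C f \<Longrightarrow> mcomp C f (inv_arr C f) = mid C (mcod C f)"
  using is_inverse_inv_arr unfolding is_inverse_def by blast+

lemma iso_id [simp]: "x \<in> obj C \<Longrightarrow> iso C (mid C x)"
  unfolding iso_def is_inverse_def by (rule exI[of _ "mid C x"]) simp

lemma iso_inv_arr: "iso C f \<Longrightarrow> iso C (inv_arr C f)"
  using is_inverse_inv_arr unfolding iso_def is_inverse_def by auto

lemma comp_inv_arr_cancel_left [simp]:
  "\<lbrakk>iso C f; h \<in> arr C; mcod C h = mdom C f\<rbrakk> \<Longrightarrow> mcomp C (inv_arr C f) (mcomp C f h) = h"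
  and comp_inv_arr_cancel_right [simp]:
  "\<lbrakk>iso C f; h \<in> arr C; mcod C h = mcod C f\<rbrakk> \<Longrightarrow> mcomp C f (mcomp C (inv_arr C f) h) = h"
  by (simp_all add: iso_in_arr comp_assoc[symmetric])

lemma iso_cancel_right:
  assumes "iso C f" and "g \<in> arr C" and "h \<in> arr C"
    and "mdom C g = mcod C f" and "mdom C h = mcod C f"
    and "mcomp C g f = mcomp C h f"
  shows "g = h"
proof -
  have f: "f \<in> arr C" using assms(1) by (rule iso_in_arr)
  have "g = mcomp C (mcomp C g f) (inv_arr C f)"
    using assms(1-4) f by (simp add: comp_assoc)
  also have "\<dots> = mcomp C (mcomp C h f) (inv_arr C f)"
    using assms(6) by simp
  also have "\<dots> = h"
    using assms(1,3,5) f by (simp add: comp_assoc)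
  finally show ?thesis .
qed

lemma iso_comp:
  assumes "iso C f" and "iso C g" and "mdom C g = mcod C f"
  shows "iso C (mcomp C g f)"
proof -
  have "is_inverse C (mcomp C g f) (mcomp C (inv_arr C f) (inv_arr C g))"
    using assms iso_in_arr[OF assms(1)] iso_in_arr[OF assms(2)]
    unfolding is_inverse_def by (simp add: comp_assoc)
  then show ?thesis unfolding iso_def by blast
qed

lemma iso_tensm:
  assumes "iso C f" and "iso C g"
  shows "iso C (tensm C f g)"
proof -
  have "is_inverse C (tensm C f g) (tensm C (inv_arr C f) (inv_arr C g))"
    using assms iso_in_arr[OF assms(1)] iso_in_arr[OF assms(2)]
    unfolding is_inverse_def by (simp add: interchange[symmetric])
  then show ?thesis unfolding iso_def by blast
qed

end

locale strict_unit_monoidal_cat = monoidal_cat +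
  assumes lunit_id: "x \<in> obj C \<Longrightarrow> lunit C x = mid C x"
    and runit_id: "x \<in> obj C \<Longrightarrow> runit C x = mid C x"
begin

lemma tens_unit_left [simp]: "x \<in> obj C \<Longrightarrow> tens C (unit_ob C) x = x"
  using dom_lunit[of x] by (simp add: lunit_id)

lemma tens_unit_right [simp]: "x \<in> obj C \<Longrightarrow> tens C x (unit_ob C) = x"
  using dom_runit[of x] by (simp add: runit_id)

lemma tensm_unit_left [simp]: "f \<in> arr C \<Longrightarrow> tensm C (mid C (unit_ob C)) f = f"
  using lunit_naturality[of f] by (simp add: lunit_id)

lemma tensm_unit_right [simp]: "f \<in> arr C \<Longrightarrow> tensm C f (mid C (unit_ob C)) = f"
  using runit_naturality[of f] by (simp add: runit_id)

lemma scalar_tensm_naturality: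
  assumes c: "c \<in> arr C" "mdom C c = unit_ob C" "mcod C c = unit_ob C" and h: "h \<in> arr C"
  shows "mcomp C h (tensm C c (mid C (mdom C h))) = mcomp C (tensm C c (mid C (mcod C h))) h"
proof -
  have "mcomp C h (tensm C c (mid C (mdom C h))) = tensm C c h"
    using interchange[of c "mid C (unit_ob C)" "mid C (mdom C h)" h] c h by simp
  moreover have "mcomp C (tensm C c (mid C (mcod C h))) h = tensm C c h"
    using interchange[of "mid C (unit_ob C)" c h "mid C (mcod C h)"] c h by simp
  ultimately show ?thesis
    by simp
qed

end

definition natural_iso :: "('o1, 'm1, 'z1) mcat_scheme \<Rightarrow> ('o2, 'm2, 'z2) mcat_scheme \<Rightarrow>
    ('o1, 'm1, 'o2, 'm2, 'z3) mfun_scheme \<Rightarrow> ('o1, 'm1, 'o2, 'm2, 'z4) mfun_scheme \<Rightarrow>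
    ('o1 \<Rightarrow> 'm2) \<Rightarrow> bool" where
  "natural_iso C D F H \<theta> \<equiv>
    (\<forall>x\<in>obj C. \<theta> x \<in> arr D \<and> iso D (\<theta> x) \<and> mdom D (\<theta> x) = fob F x \<and> mcod D (\<theta> x) = fob H x) \<and>
    (\<forall>f\<in>arr C. mcomp D (farr H f) (\<theta> (mdom C f)) = mcomp D (\<theta> (mcod C f)) (farr F f))"

definition transport_monoidal :: "('o1, 'm1, 'z1) mcat_scheme \<Rightarrow> ('o2, 'm2, 'z2) mcat_scheme \<Rightarrow>
    ('o1, 'm1, 'o2, 'm2, 'z3) mfun_scheme \<Rightarrow> ('o1, 'm1, 'o2, 'm2, 'z4) mfun_scheme \<Rightarrow>
    ('o1 \<Rightarrow> 'm2) \<Rightarrow> ('o1, 'm1, 'o2, 'm2) mfun" where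
  "transport_monoidal C D F H \<theta> =
    \<lparr>fob = fob H, farr = farr H,
     f2 = (\<lambda>x y. mcomp D (\<theta> (tens C x y))
                  (mcomp D (f2 F x y) (tensm D (inv_arr D (\<theta> x)) (inv_arr D (\<theta> y))))),
     f0 = mcomp D (\<theta> (unit_ob C)) (f0 F)\<rparr>"

locale monoidal_transport =
  C: monoidal_cat C + D: monoidal_cat D
  for C :: "('o, 'm, 'y) mcat_scheme" and D :: "('p, 'n, 'z) mcat_scheme" +
  fixes F :: "('o, 'm, 'p, 'n, 'a) mfun_scheme" and H :: "('o, 'm, 'p, 'n, 'b) mfun_scheme"
    and \<theta> :: "'o \<Rightarrow> 'n"
  assumes F: "weak_monoidal_functor C D F" and H: "is_functor C D H"
    and \<theta>: "natural_iso C D F H \<theta>"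
begin

abbreviation compD (infixr "\<cdot>" 55) where "g \<cdot> f \<equiv> mcomp D g f"
abbreviation tensD (infixr "\<otimes>" 60) where "f \<otimes> g \<equiv> tensm D f g"
abbreviation G where "G \<equiv> transport_monoidal C D F H \<theta>"
abbreviation G2 where "G2 \<equiv> f2 G"

lemma F_obj [simp]: "x \<in> obj C \<Longrightarrow> fob F x \<in> obj D"
  and F_arr [simp]: "f \<in> arr C \<Longrightarrow> farr F f \<in> arr D"
  and dom_F [simp]: "f \<in> arr C \<Longrightarrow> mdom D (farr F f) = fob F (mdom C f)"
  and cod_F [simp]: "f \<in> arr C \<Longrightarrow> mcod D (farr F f) = fob F (mcod C f)"
  using F unfolding weak_monoidal_functor_def is_functor_def by blast+

lemma H_obj [simp]: "x \<in> obj C \<Longrightarrow> fob H x \<in> obj D"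
  and H_arr [simp]: "f \<in> arr C \<Longrightarrow> farr H f \<in> arr D"
  and dom_H [simp]: "f \<in> arr C \<Longrightarrow> mdom D (farr H f) = fob H (mdom C f)"
  and cod_H [simp]: "f \<in> arr C \<Longrightarrow> mcod D (farr H f) = fob H (mcod C f)"
  using H unfolding is_functor_def by blast+

lemma F2_in_arr [simp]: "\<lbrakk>x \<in> obj C; y \<in> obj C\<rbrakk> \<Longrightarrow> f2 F x y \<in> arr D"
  and iso_F2: "\<lbrakk>x \<in> obj C; y \<in> obj C\<rbrakk> \<Longrightarrow> iso D (f2 F x y)"
  and dom_F2 [simp]: "\<lbrakk>x \<in> obj C; y \<in> obj C\<rbrakk> \<Longrightarrow> mdom D (f2 F x y) = tens D (fob F x) (fob F y)"
  and cod_F2 [simp]: "\<lbrakk>x \<in> obj C; y \<in> obj C\<rbrakk> \<Longrightarrow> mcod D (f2 F x y) = fob F (tens C x y)"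
  and F0_in_arr [simp]: "f0 F \<in> arr D"
  and iso_F0: "iso D (f0 F)"
  and dom_F0 [simp]: "mdom D (f0 F) = unit_ob D"
  and cod_F0 [simp]: "mcod D (f0 F) = fob F (unit_ob C)"
  using F unfolding weak_monoidal_functor_def by blast+

lemma F2_naturality:
  "\<lbrakk>f \<in> arr C; g \<in> arr C\<rbrakk> \<Longrightarrow>
   farr F (tensm C f g) \<cdot> f2 F (mdom C f) (mdom C g) =
   f2 F (mcod C f) (mcod C g) \<cdot> (farr F f \<otimes> farr F g)"
  and F_assoc:
  "\<lbrakk>x \<in> obj C; y \<in> obj C; z \<in> obj C\<rbrakk> \<Longrightarrow>
   farr F (assoc C x y z) \<cdot> f2 F (tens C x y) z \<cdot> (f2 F x y \<otimes> mid D (fob F z)) =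
   f2 F x (tens C y z) \<cdot> (mid D (fob F x) \<otimes> f2 F y z) \<cdot> assoc D (fob F x) (fob F y) (fob F z)"
  and F_lunit:
  "x \<in> obj C \<Longrightarrow>
   farr F (lunit C x) \<cdot> f2 F (unit_ob C) x \<cdot> (f0 F \<otimes> mid D (fob F x)) = lunit D (fob F x)"
  and F_runit:
  "x \<in> obj C \<Longrightarrow>
   farr F (runit C x) \<cdot> f2 F x (unit_ob C) \<cdot> (mid D (fob F x) \<otimes> f0 F) = runit D (fob F x)"
  using F unfolding weak_monoidal_functor_def by blast+

lemma \<theta>_in_arr [simp]: "x \<in> obj C \<Longrightarrow> \<theta> x \<in> arr D"
  and iso_\<theta> [simp]: "x \<in> obj C \<Longrightarrow> iso D (\<theta> x)"
  and dom_\<theta> [simp]: "x \<in> obj C \<Longrightarrow> mdom D (\<theta> x) = fob F x"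
  and cod_\<theta> [simp]: "x \<in> obj C \<Longrightarrow> mcod D (\<theta> x) = fob H x"
  and \<theta>_naturality: "f \<in> arr C \<Longrightarrow> farr H f \<cdot> \<theta> (mdom C f) = \<theta> (mcod C f) \<cdot> farr F f"
  using \<theta> unfolding natural_iso_def by blast+

lemma \<theta>_naturality_comp:
  "\<lbrakk>f \<in> arr C; r \<in> arr D; mcod D r = fob F (mdom C f)\<rbrakk> \<Longrightarrow>
   farr H f \<cdot> \<theta> (mdom C f) \<cdot> r = \<theta> (mcod C f) \<cdot> farr F f \<cdot> r"
  by (simp add: \<theta>_naturality flip: D.comp_assoc)

lemma fob_G [simp]: "fob G = fob H"
  and farr_G [simp]: "farr G = farr H"
  and f0_G [simp]: "f0 G = \<theta> (unit_ob C) \<cdot> f0 F"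
  and f2_G: "G2 x y = \<theta> (tens C x y) \<cdot> f2 F x y \<cdot> (inv_arr D (\<theta> x) \<otimes> inv_arr D (\<theta> y))"
  unfolding transport_monoidal_def by simp_all

lemma G2_in_arr [simp]: "\<lbrakk>x \<in> obj C; y \<in> obj C\<rbrakk> \<Longrightarrow> G2 x y \<in> arr D"
  and dom_G2 [simp]: "\<lbrakk>x \<in> obj C; y \<in> obj C\<rbrakk> \<Longrightarrow> mdom D (G2 x y) = tens D (fob H x) (fob H y)"
  and cod_G2 [simp]: "\<lbrakk>x \<in> obj C; y \<in> obj C\<rbrakk> \<Longrightarrow> mcod D (G2 x y) = fob H (tens C x y)"
  by (simp_all add: f2_G)

lemma G2_comp_\<theta>:
  assumes "x \<in> obj C" "y \<in> obj C"
  shows "G2 x y \<cdot> (\<theta> x \<otimes> \<theta> y) = \<theta> (tens C x y) \<cdot> f2 F x y"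
proof -
  have "(inv_arr D (\<theta> x) \<otimes> inv_arr D (\<theta> y)) \<cdot> (\<theta> x \<otimes> \<theta> y) = mid D (tens D (fob F x) (fob F y))"
    using assms by (simp flip: D.interchange)
  then show ?thesis
    using assms by (simp add: f2_G D.comp_assoc)
qed

lemma G2_comp_\<theta>_comp:
  "\<lbrakk>x \<in> obj C; y \<in> obj C; r \<in> arr D; mcod D r = tens D (fob F x) (fob F y)\<rbrakk> \<Longrightarrow>
   G2 x y \<cdot> (\<theta> x \<otimes> \<theta> y) \<cdot> r = \<theta> (tens C x y) \<cdot> f2 F x y \<cdot> r"
  by (simp add: G2_comp_\<theta> flip: D.comp_assoc)

text \<open>Each coherence axiom of G is checked after precomposing both sides with a tensor product
  of components of \<theta>; the relation G2 x y \<cdot> (\<theta> x \<otimes> \<theta> y) = \<theta> (x \<otimes> y) \<cdot> F2 x y then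
  turns it into the corresponding axiom of F.\<close>

lemma G2_naturality:
  assumes f: "f \<in> arr C" and g: "g \<in> arr C"
  shows "farr H (tensm C f g) \<cdot> G2 (mdom C f) (mdom C g) =
    G2 (mcod C f) (mcod C g) \<cdot> (farr H f \<otimes> farr H g)" (is "?L = ?R")
proof (rule D.iso_cancel_right)
  let ?a = "mdom C f" and ?b = "mdom C g" and ?a' = "mcod C f" and ?b' = "mcod C g"
  have "?L \<cdot> (\<theta> ?a \<otimes> \<theta> ?b) = \<theta> (tens C ?a' ?b') \<cdot> farr F (tensm C f g) \<cdot> f2 F ?a ?b"
    using f g \<theta>_naturality_comp[of "tensm C f g"] by (simp add: D.comp_assoc G2_comp_\<theta>)
  also have "\<dots> = \<theta> (tens C ?a' ?b') \<cdot> f2 F ?a' ?b' \<cdot> (farr F f \<otimes> farr F g)"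
    using f g by (simp add: F2_naturality)
  also have "\<dots> = G2 ?a' ?b' \<cdot> (\<theta> ?a' \<otimes> \<theta> ?b') \<cdot> (farr F f \<otimes> farr F g)"
    using f g by (simp add: G2_comp_\<theta>_comp)
  also have "\<dots> = G2 ?a' ?b' \<cdot> (farr H f \<otimes> farr H g) \<cdot> (\<theta> ?a \<otimes> \<theta> ?b)"
    using f g by (simp add: \<theta>_naturality flip: D.interchange)
  finally show "?L \<cdot> (\<theta> ?a \<otimes> \<theta> ?b) = ?R \<cdot> (\<theta> ?a \<otimes> \<theta> ?b)"
    using f g by (simp add: D.comp_assoc)
qed (use f g in \<open>simp_all add: D.iso_tensm\<close>)

lemma G2_assoc:
  assumes x: "x \<in> obj C" and y: "y \<in> obj C" and z: "z \<in> obj C"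
  shows "farr H (assoc C x y z) \<cdot> G2 (tens C x y) z \<cdot> (G2 x y \<otimes> mid D (fob H z)) =
    G2 x (tens C y z) \<cdot> (mid D (fob H x) \<otimes> G2 y z) \<cdot> assoc D (fob H x) (fob H y) (fob H z)"
    (is "?L = ?R")
proof (rule D.iso_cancel_right)
  let ?xy = "tens C x y" and ?yz = "tens C y z" and ?\<alpha> = "assoc C x y z"
    and ?\<alpha>F = "assoc D (fob F x) (fob F y) (fob F z)" and ?\<theta>3 = "(\<theta> x \<otimes> \<theta> y) \<otimes> \<theta> z"
  have "?L \<cdot> ?\<theta>3 = farr H ?\<alpha> \<cdot> G2 ?xy z \<cdot> ((G2 x y \<cdot> (\<theta> x \<otimes> \<theta> y)) \<otimes> \<theta> z)"
    using x y z by (simp add: D.comp_assoc flip: D.interchange)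
  also have "\<dots> = farr H ?\<alpha> \<cdot> G2 ?xy z \<cdot> (\<theta> ?xy \<otimes> \<theta> z) \<cdot> (f2 F x y \<otimes> mid D (fob F z))"
    using x y z by (simp add: G2_comp_\<theta> flip: D.interchange)
  also have "\<dots> = \<theta> (tens C x ?yz) \<cdot> farr F ?\<alpha> \<cdot> f2 F ?xy z \<cdot> (f2 F x y \<otimes> mid D (fob F z))"
    using x y z \<theta>_naturality_comp[of ?\<alpha>] by (simp add: G2_comp_\<theta>_comp)
  also have "\<dots> = \<theta> (tens C x ?yz) \<cdot> f2 F x ?yz \<cdot> (mid D (fob F x) \<otimes> f2 F y z) \<cdot> ?\<alpha>F"
    using x y z by (simp add: F_assoc)
  also have "\<dots> = G2 x ?yz \<cdot> ((\<theta> x \<otimes> \<theta> ?yz) \<cdot> (mid D (fob F x) \<otimes> f2 F y z)) \<cdot> ?\<alpha>F"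
    using x y z by (simp add: G2_comp_\<theta>_comp D.comp_assoc)
  also have "\<dots> = G2 x ?yz \<cdot> ((mid D (fob H x) \<otimes> G2 y z) \<cdot> (\<theta> x \<otimes> (\<theta> y \<otimes> \<theta> z))) \<cdot> ?\<alpha>F"
    using x y z by (simp add: G2_comp_\<theta> flip: D.interchange)
  also have "\<dots> = ?R \<cdot> ?\<theta>3"
    using x y z D.assoc_naturality[of "\<theta> x" "\<theta> y" "\<theta> z"] by (simp add: D.comp_assoc)
  finally show "?L \<cdot> ?\<theta>3 = ?R \<cdot> ?\<theta>3" .
qed (use x y z in \<open>simp_all add: D.iso_tensm\<close>)

lemma G2_lunit:
  assumes x: "x \<in> obj C"
  shows "farr H (lunit C x) \<cdot> G2 (unit_ob C) x \<cdot> ((\<theta> (unit_ob C) \<cdot> f0 F) \<otimes> mid D (fob H x)) =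
    lunit D (fob H x)" (is "?L = ?R")
proof (rule D.iso_cancel_right)
  let ?\<theta>1 = "mid D (unit_ob D) \<otimes> \<theta> x"
  have "?L \<cdot> ?\<theta>1 =
      farr H (lunit C x) \<cdot> G2 (unit_ob C) x \<cdot> (\<theta> (unit_ob C) \<otimes> \<theta> x) \<cdot> (f0 F \<otimes> mid D (fob F x))"
    using x by (simp add: D.comp_assoc flip: D.interchange)
  also have "\<dots> = \<theta> x \<cdot> farr F (lunit C x) \<cdot> f2 F (unit_ob C) x \<cdot> (f0 F \<otimes> mid D (fob F x))"
    using x \<theta>_naturality_comp[of "lunit C x"] by (simp add: G2_comp_\<theta>_comp)
  also have "\<dots> = \<theta> x \<cdot> lunit D (fob F x)"
    using x by (simp add: F_lunit)
  also have "\<dots> = ?R \<cdot> ?\<theta>1"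
    using x D.lunit_naturality[of "\<theta> x"] by simp
  finally show "?L \<cdot> ?\<theta>1 = ?R \<cdot> ?\<theta>1" .
qed (use x in \<open>simp_all add: D.iso_tensm\<close>)

lemma G2_runit:
  assumes x: "x \<in> obj C"
  shows "farr H (runit C x) \<cdot> G2 x (unit_ob C) \<cdot> (mid D (fob H x) \<otimes> (\<theta> (unit_ob C) \<cdot> f0 F)) =
    runit D (fob H x)" (is "?L = ?R")
proof (rule D.iso_cancel_right)
  let ?\<theta>1 = "\<theta> x \<otimes> mid D (unit_ob D)"
  have "?L \<cdot> ?\<theta>1 =
      farr H (runit C x) \<cdot> G2 x (unit_ob C) \<cdot> (\<theta> x \<otimes> \<theta> (unit_ob C)) \<cdot> (mid D (fob F x) \<otimes> f0 F)"
    using x by (simp add: D.comp_assoc flip: D.interchange)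
  also have "\<dots> = \<theta> x \<cdot> farr F (runit C x) \<cdot> f2 F x (unit_ob C) \<cdot> (mid D (fob F x) \<otimes> f0 F)"
    using x \<theta>_naturality_comp[of "runit C x"] by (simp add: G2_comp_\<theta>_comp)
  also have "\<dots> = \<theta> x \<cdot> runit D (fob F x)"
    using x by (simp add: F_runit)
  also have "\<dots> = ?R \<cdot> ?\<theta>1"
    using x D.runit_naturality[of "\<theta> x"] by simp
  finally show "?L \<cdot> ?\<theta>1 = ?R \<cdot> ?\<theta>1" .
qed (use x in \<open>simp_all add: D.iso_tensm\<close>)

lemma iso_G2: "\<lbrakk>x \<in> obj C; y \<in> obj C\<rbrakk> \<Longrightarrow> iso D (G2 x y)"
  by (simp add: f2_G iso_F2 D.iso_comp D.iso_tensm D.iso_inv_arr)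

theorem weak_monoidal_functor_transport: "weak_monoidal_functor C D G"
proof -
  have "is_functor C D G"
    using H unfolding is_functor_def by simp
  moreover have "iso D (f0 G)"
    by (simp add: D.iso_comp iso_F0)
  ultimately show ?thesis
    unfolding weak_monoidal_functor_def
    by (simp add: iso_G2 G2_naturality G2_assoc G2_lunit G2_runit)
qed

theorem monoidal_nat_iso_transport: "monoidal_nat_iso C D F G \<theta>"
  unfolding monoidal_nat_iso_def monoidal_nat_trans_def
  by (simp add: \<theta>_naturality G2_comp_\<theta>)

end

lemma (in strict_unit_monoidal_cat) natural_iso_scalar:
  assumes F: "is_functor B C F"
    and c: "iso C c" "mdom C c = unit_ob C" "mcod C c = unit_ob C"
  shows "natural_iso B C F F (\<lambda>x. tensm C c (mid C (fob F x)))"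
proof -
  have c_arr: "c \<in> arr C"
    using c(1) by (rule iso_in_arr)
  have F_obj: "\<forall>x\<in>obj B. fob F x \<in> obj C"
    and F_arr: "\<forall>f\<in>arr B. farr F f \<in> arr C \<and> mdom C (farr F f) = fob F (mdom B f) \<and>
      mcod C (farr F f) = fob F (mcod B f)"
    using F unfolding is_functor_def by blast+
  have "mcomp C (farr F f) (tensm C c (mid C (fob F (mdom B f)))) =
      mcomp C (tensm C c (mid C (fob F (mcod B f)))) (farr F f)" if "f \<in> arr B" for f
    using scalar_tensm_naturality[OF c_arr c(2,3), of "farr F f"] F_arr that by simp
  then show ?thesis
    unfolding natural_iso_def using c c_arr F_obj by (simp add: iso_tensm)
qed

lemma fob_unit_skeletal:
  assumes "monoidal_category C" "monoidal_category D" "skeletal D" "weak_monoidal_functor C D F"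
  shows "fob F (unit_ob C) = unit_ob D"
proof -
  interpret C: monoidal_cat C by (rule monoidal_cat.intro) fact
  interpret D: monoidal_cat D by (rule monoidal_cat.intro) fact
  have "fob F (unit_ob C) \<in> obj D"
    using assms(4) unfolding weak_monoidal_functor_def is_functor_def by simp
  moreover have "f0 F \<in> arr D \<and> iso D (f0 F) \<and>
      mdom D (f0 F) = unit_ob D \<and> mcod D (f0 F) = fob F (unit_ob C)"
    using assms(4) unfolding weak_monoidal_functor_def by blast
  ultimately show ?thesis
    using assms(3) D.unit_in_obj unfolding skeletal_def by metis
qed

theorem proposition8p10:
  fixes C :: "('o, 'm) c2g" and D :: "('p, 'n) c2g" and F :: "('o, 'm, 'p, 'n) mfun"
  assumes "special_2group C" and "special_2group D" and "c2g_hom C D F"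
  shows "\<exists>G :: ('o, 'm, 'p, 'n) mfun. special_hom C D G \<and> isomorphic_homs C D F G"
proof -
  have C: "monoidal_category C" and D: "monoidal_category D" and "skeletal D"
    and F: "weak_monoidal_functor C D F" and iso_F0: "iso D (f0 F)"
    using assms
    unfolding special_2group_def coherent_2group_def c2g_hom_def weak_monoidal_functor_def
    by blast+
  interpret D: strict_unit_monoidal_cat D
    using assms(2) D unfolding special_2group_def by unfold_locales auto
  have F1: "fob F (unit_ob C) = unit_ob D"
    using C D \<open>skeletal D\<close> F by (rule fob_unit_skeletal)
  define \<theta> where "\<theta> x = tensm D (inv_arr D (f0 F)) (mid D (fob F x))" for x
  have "natural_iso C D F F \<theta>"
    unfolding \<theta>_def using F iso_F0 F1
    by (intro D.natural_iso_scalar) (auto simp: weak_monoidal_functor_def D.iso_inv_arr)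
  then interpret monoidal_transport C D F F \<theta>
    using C D F by unfold_locales (auto simp: weak_monoidal_functor_def)
  have "f0 G = mid D (unit_ob D)"
    using iso_F0 F1 by (simp add: \<theta>_def)
  then have "special_hom C D G"
    using assms weak_monoidal_functor_transport unfolding special_hom_def c2g_hom_def by blast
  moreover have "isomorphic_homs C D F G"
    using monoidal_nat_iso_transport unfolding isomorphic_homs_def by blast
  ultimately show ?thesis
    by blast
qed

end
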